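(* Let $K$ be a real closed field, $C$ a multiplicative cut in $K$, and let $L$ be the real closure of the ordered field $K(x)$, where $x$ realizes the cut $C$. Then for any $y\in L$ realizing the same cut $C$ of $K$, we have $x^{1/n}<y<x^n$ for some positive integer $n$.
   Context: A cut of a real closed field $K$ is a pair $C=(C^-,C^+)$ with $K=C^-\cup C^+$ disjoint and $C^-<C^+$. $K_+=\{c\in K:c>0\}$. The cut $C$ is multiplicative if $C^-\cap K_+$ is closed under multiplication and contains $2$. If $K\subseteq L$ are ordered fields, an element $a\in L$ realizes the cut $C$ of $K$ if $C^-=\{c\in K:c<a\}$ and $C^+=\{c\in K:c>a\}$. $K(x)$ denotes the ordered field generated by $K$ and an element $x$ realizing $C$. *)

theory Defs
  imports "HOL-Computational_Algebra.Polynomial"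
begin

text \<open>All fields are subfields of an ambient ordered field of type 'a, with the induced order.\<close>

definition subfield :: "'a::field set \<Rightarrow> bool" where
  "subfield F \<longleftrightarrow> 0 \<in> F \<and> 1 \<in> F \<and>
     (\<forall>a\<in>F. \<forall>b\<in>F. a + b \<in> F \<and> a - b \<in> F \<and> a * b \<in> F) \<and>
     (\<forall>a\<in>F. inverse a \<in> F)"

definition real_closed_subfield :: "'a::linordered_field set \<Rightarrow> bool" where
  "real_closed_subfield F \<longleftrightarrow> subfield F \<and>
     (\<forall>a\<in>F. 0 \<le> a \<longrightarrow> (\<exists>b\<in>F. b * b = a)) \<and>
     (\<forall>p. (\<forall>i. coeff p i \<in> F) \<longrightarrow> odd (degree p) \<longrightarrow> (\<exists>r\<in>F. poly p r = 0))"

definition adjoin :: "'a::field set \<Rightarrow> 'a \<Rightarrow> 'a set" where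
  "adjoin F x = \<Inter>{E. subfield E \<and> F \<subseteq> E \<and> x \<in> E}"

definition algebraic_over :: "'a::field set \<Rightarrow> 'a \<Rightarrow> bool" where
  "algebraic_over F a \<longleftrightarrow> (\<exists>p. p \<noteq> 0 \<and> (\<forall>i. coeff p i \<in> F) \<and> poly p a = 0)"

definition real_closure_of :: "'a::linordered_field set \<Rightarrow> 'a set \<Rightarrow> bool" where
  "real_closure_of L F \<longleftrightarrow> real_closed_subfield L \<and> F \<subseteq> L \<and> (\<forall>a\<in>L. algebraic_over F a)"

definition is_cut :: "'a::linorder set \<Rightarrow> 'a set \<Rightarrow> 'a set \<Rightarrow> bool" where
  "is_cut K Cm Cp \<longleftrightarrow> K = Cm \<union> Cp \<and> Cm \<inter> Cp = {} \<and> (\<forall>a\<in>Cm. \<forall>b\<in>Cp. a < b)"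

definition multiplicative_cut :: "'a::linordered_field set \<Rightarrow> 'a set \<Rightarrow> 'a set \<Rightarrow> bool" where
  "multiplicative_cut K Cm Cp \<longleftrightarrow> is_cut K Cm Cp \<and>
     (\<forall>a\<in>Cm \<inter> {c. 0 < c}. \<forall>b\<in>Cm \<inter> {c. 0 < c}. a * b \<in> Cm \<inter> {c. 0 < c}) \<and> 2 \<in> Cm"

definition realizes_cut :: "'a::linorder set \<Rightarrow> 'a set \<Rightarrow> 'a set \<Rightarrow> 'a \<Rightarrow> bool" where
  "realizes_cut K Cm Cp a \<longleftrightarrow> Cm = {c\<in>K. c < a} \<and> Cp = {c\<in>K. a < c}"

end

theory Submission
  imports Defs
begin

text \<open>Suppose no n works. Taking n-th roots in the real closed field L, this means that
either x^n \<le> y for all n or y^n \<le> x for all n. We show that then y is not even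
algebraic over K(x). Because K is real closed and the cut is multiplicative, every nonzero
c \<in> K is either larger than all powers of a realization z of the cut, smaller than all their
inverses, or negligible with respect to z (all powers of c and of 1/c lie below z). It follows
that the terms of a polynomial over K evaluated at x lie in pairwise different archimedean
classes, so the largest one dominates and every nonzero element of K(x) is archimedean
equivalent to a monomial a x^k with a \<in> K and k \<in> \<int>. Under either separation hypothesis
the terms of a nonzero polynomial over K(x) evaluated at y again lie in pairwise different
archimedean classes, so the polynomial cannot vanish at y.\<close>

section \<open>Subfields and polynomial fractions\<close>

lemma subfield_0: "subfield F \<Longrightarrow> 0 \<in> F"
  and subfield_1: "subfield F \<Longrightarrow> 1 \<in> F"
  and subfield_add: "subfield F \<Longrightarrow> a \<in> F \<Longrightarrow> b \<in> F \<Longrightarrow> a + b \<in> F"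
  and subfield_diff: "subfield F \<Longrightarrow> a \<in> F \<Longrightarrow> b \<in> F \<Longrightarrow> a - b \<in> F"
  and subfield_mult: "subfield F \<Longrightarrow> a \<in> F \<Longrightarrow> b \<in> F \<Longrightarrow> a * b \<in> F"
  and subfield_inverse: "subfield F \<Longrightarrow> a \<in> F \<Longrightarrow> inverse a \<in> F"
  unfolding subfield_def by blast+

lemma subfield_uminus: "subfield F \<Longrightarrow> a \<in> F \<Longrightarrow> - a \<in> F"
  by (metis diff_0 subfield_0 subfield_diff)

lemma subfield_divide: "subfield F \<Longrightarrow> a \<in> F \<Longrightarrow> b \<in> F \<Longrightarrow> a / b \<in> F"
  by (simp add: divide_inverse subfield_inverse subfield_mult)

lemma subfield_abs: "subfield F \<Longrightarrow> (a::'a::linordered_field) \<in> F \<Longrightarrow> \<bar>a\<bar> \<in> F"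
  by (cases "a \<ge> 0") (auto simp: subfield_uminus)

lemma subfield_sum: "subfield F \<Longrightarrow> (\<And>i. i \<in> A \<Longrightarrow> f i \<in> F) \<Longrightarrow> sum f A \<in> F"
  by (induction A rule: infinite_finite_induct) (auto simp: subfield_0 subfield_add)

lemma real_closed_subfield_imp_subfield: "real_closed_subfield F \<Longrightarrow> subfield F"
  unfolding real_closed_subfield_def by blast

lemma real_closed_subfield_nth_root:
  fixes a :: "'a::linordered_field"
  assumes rc: "real_closed_subfield F" and "a \<in> F" "0 < a" "0 < n"
  shows "\<exists>r\<in>F. 0 < r \<and> r ^ n = a"
  using assms(2-)
proof (induction n arbitrary: a rule: less_induct)
  case (less n)
  have sf: "subfield F" using rc by (rule real_closed_subfield_imp_subfield)
  show ?case
  proof (cases "even n")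
    case True
    then obtain k where k: "n = 2 * k" by blast
    with less.prems have "0 < k" "k < n" by auto
    obtain b where b: "b \<in> F" "b * b = a"
      using rc less.prems unfolding real_closed_subfield_def by auto
    have "\<bar>b\<bar> \<in> F" "0 < \<bar>b\<bar>" using sf b less.prems by (auto simp: subfield_abs)
    then obtain r where r: "r \<in> F" "0 < r" "r ^ k = \<bar>b\<bar>"
      using less.IH[OF \<open>k < n\<close>] \<open>0 < k\<close> by blast
    have "r ^ n = (r ^ k) ^ 2" using k by (simp add: power_mult[symmetric] mult.commute)
    also have "\<dots> = a" using b r by (simp add: power2_eq_square)
    finally show ?thesis using r by blast
  next
    case False
    define p where "p = [:- a:] + monom 1 n"
    have "\<forall>i. coeff p i \<in> F"
      unfolding p_def using sf less.prems
      by (auto simp: coeff_pCons subfield_0 subfield_1 subfield_uminus split: nat.split)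
    moreover have "degree p = n" unfolding p_def
      using less.prems by (subst degree_add_eq_right) (auto simp: degree_monom_eq)
    ultimately obtain r where r: "r \<in> F" "poly p r = 0"
      using rc False unfolding real_closed_subfield_def by blast
    hence rn: "r ^ n = a" unfolding p_def by (simp add: poly_monom)
    have "0 < r"
    proof (rule ccontr)
      assume "\<not> 0 < r"
      hence "r ^ n \<le> 0" using False less.prems by (simp add: power_le_zero_eq)
      thus False using rn less.prems by simp
    qed
    thus ?thesis using r rn by blast
  qed
qed

definition poly_over :: "'a::field set \<Rightarrow> 'a poly \<Rightarrow> bool" where
  "poly_over F p \<longleftrightarrow> (\<forall>i. coeff p i \<in> F)"

lemma poly_over_const: "subfield F \<Longrightarrow> a \<in> F \<Longrightarrow> poly_over F [:a:]"
  unfolding poly_over_def by (auto simp: coeff_pCons subfield_0 split: nat.split)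

lemma poly_over_X: "subfield F \<Longrightarrow> poly_over F [:0, 1:]"
  unfolding poly_over_def by (auto simp: coeff_pCons subfield_0 subfield_1 split: nat.split)

lemma poly_over_add: "subfield F \<Longrightarrow> poly_over F p \<Longrightarrow> poly_over F q \<Longrightarrow> poly_over F (p + q)"
  unfolding poly_over_def by (simp add: subfield_add)

lemma poly_over_diff: "subfield F \<Longrightarrow> poly_over F p \<Longrightarrow> poly_over F q \<Longrightarrow> poly_over F (p - q)"
  unfolding poly_over_def by (simp add: subfield_diff)

lemma poly_over_mult: "subfield F \<Longrightarrow> poly_over F p \<Longrightarrow> poly_over F q \<Longrightarrow> poly_over F (p * q)"
  unfolding poly_over_def coeff_mult by (auto intro!: subfield_sum subfield_mult)

definition poly_fractions :: "'a::field set \<Rightarrow> 'a \<Rightarrow> 'a set" where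
  "poly_fractions F x =
     {poly f x / poly g x | f g. poly_over F f \<and> poly_over F g \<and> poly g x \<noteq> 0}"

lemma poly_fractionsI:
  "poly_over F f \<Longrightarrow> poly_over F g \<Longrightarrow> poly g x \<noteq> 0 \<Longrightarrow> poly f x / poly g x \<in> poly_fractions F x"
  unfolding poly_fractions_def by blast

lemma poly_fractionsE:
  assumes "a \<in> poly_fractions F x"
  obtains f g where "poly_over F f" "poly_over F g" "poly g x \<noteq> 0" "a = poly f x / poly g x"
  using assms unfolding poly_fractions_def by blast

lemma const_mem_poly_fractions:
  assumes "subfield F" and "a \<in> F"
  shows "a \<in> poly_fractions F x"
proof -
  have "poly [:a:] x / poly [:1:] x \<in> poly_fractions F x"
    using assms by (intro poly_fractionsI poly_over_const subfield_1) auto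
  thus ?thesis by simp
qed

lemma poly_fractions_subfield:
  assumes sf: "subfield F"
  shows "subfield (poly_fractions F x)"
proof -
  have ring_ops: "a + b \<in> poly_fractions F x \<and> a - b \<in> poly_fractions F x \<and> a * b \<in> poly_fractions F x"
    if a: "a \<in> poly_fractions F x" and b: "b \<in> poly_fractions F x" for a b
  proof -
    obtain f1 g1 where 1: "poly_over F f1" "poly_over F g1" "poly g1 x \<noteq> 0" "a = poly f1 x / poly g1 x"
      using a by (rule poly_fractionsE)
    obtain f2 g2 where 2: "poly_over F f2" "poly_over F g2" "poly g2 x \<noteq> 0" "b = poly f2 x / poly g2 x"
      using b by (rule poly_fractionsE)
    have g: "poly_over F (g1 * g2)" "poly (g1 * g2) x \<noteq> 0"
      using 1 2 sf by (simp_all add: poly_over_mult)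
    have eqs: "a + b = poly (f1 * g2 + f2 * g1) x / poly (g1 * g2) x"
      "a - b = poly (f1 * g2 - f2 * g1) x / poly (g1 * g2) x"
      "a * b = poly (f1 * f2) x / poly (g1 * g2) x"
      using 1(3) 2(3) unfolding 1(4) 2(4) by (simp_all add: field_simps)
    show ?thesis unfolding eqs
      using 1 2 sf g by (intro conjI poly_fractionsI poly_over_add poly_over_diff poly_over_mult)
  qed
  have "inverse a \<in> poly_fractions F x" if a: "a \<in> poly_fractions F x" for a
  proof -
    obtain f g where fg: "poly_over F f" "poly_over F g" "poly g x \<noteq> 0" "a = poly f x / poly g x"
      using a by (rule poly_fractionsE)
    show ?thesis
    proof (cases "poly f x = 0")
      case True
      thus ?thesis using fg const_mem_poly_fractions[OF sf subfield_0[OF sf]] by simp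
    next
      case False
      hence "inverse a = poly g x / poly f x" using fg by simp
      thus ?thesis using fg False by (simp add: poly_fractionsI)
    qed
  qed
  thus ?thesis unfolding subfield_def
    using const_mem_poly_fractions[OF sf] subfield_0[OF sf] subfield_1[OF sf] ring_ops by blast
qed

lemma adjoin_subset_poly_fractions:
  assumes sf: "subfield F"
  shows "adjoin F x \<subseteq> poly_fractions F x"
proof -
  have "poly [:0, 1:] x / poly [:1:] x \<in> poly_fractions F x"
    using sf by (intro poly_fractionsI poly_over_X poly_over_const subfield_1) auto
  hence "x \<in> poly_fractions F x" by simp
  thus ?thesis unfolding adjoin_def
    using poly_fractions_subfield[OF sf] const_mem_poly_fractions[OF sf] by (intro Inter_lower) blast
qed

lemma mem_adjoin_self: "x \<in> adjoin F x"
  unfolding adjoin_def by blast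

section \<open>Archimedean classes\<close>

definition infinitely_large :: "'a::linordered_field \<Rightarrow> bool" where
  "infinitely_large v \<longleftrightarrow> (\<forall>n::nat. of_nat n < v)"

definition infinite_or_infinitesimal :: "'a::linordered_field \<Rightarrow> bool" where
  "infinite_or_infinitesimal v \<longleftrightarrow> infinitely_large \<bar>v\<bar> \<or> infinitely_large \<bar>inverse v\<bar>"

definition arch_equiv :: "'a::linordered_field \<Rightarrow> 'a \<Rightarrow> bool" where
  "arch_equiv a b \<longleftrightarrow> (\<exists>m::nat. \<bar>a\<bar> \<le> of_nat m * \<bar>b\<bar> \<and> \<bar>b\<bar> \<le> of_nat m * \<bar>a\<bar>)"

lemma infinitely_large_gt_one: "infinitely_large v \<Longrightarrow> 1 < v"
  unfolding infinitely_large_def by (metis of_nat_1)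

lemma infinitely_large_mono: "infinitely_large a \<Longrightarrow> a \<le> b \<Longrightarrow> infinitely_large b"
  unfolding infinitely_large_def using order_less_le_trans by blast

lemma infinitely_large_root:
  assumes "infinitely_large z" "0 < v" "z \<le> v ^ k"
  shows "infinitely_large v"
  unfolding infinitely_large_def
proof
  fix n :: nat
  show "of_nat n < v"
  proof (rule ccontr)
    assume "\<not> of_nat n < v"
    hence "v ^ k \<le> of_nat (n ^ k)" using assms(2) by (simp add: power_mono)
    also have "\<dots> < z" using assms(1) unfolding infinitely_large_def by blast
    finally show False using assms(3) by simp
  qed
qed

lemma infinite_or_infinitesimal_inverse_iff:
  "infinite_or_infinitesimal (inverse v) \<longleftrightarrow> infinite_or_infinitesimal v"
  unfolding infinite_or_infinitesimal_def by auto

lemma arch_equiv_refl: "arch_equiv a a"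
  unfolding arch_equiv_def by (intro exI[of _ 1]) simp

lemma arch_equiv_sym: "arch_equiv a b \<Longrightarrow> arch_equiv b a"
  unfolding arch_equiv_def by blast

lemma arch_equiv_zero_iff: "arch_equiv a b \<Longrightarrow> a = 0 \<longleftrightarrow> b = 0"
  unfolding arch_equiv_def by auto

lemma arch_equiv_mult:
  assumes "arch_equiv a b" "arch_equiv c d"
  shows "arch_equiv (a * c) (b * d)"
proof -
  obtain m where m: "\<bar>a\<bar> \<le> of_nat m * \<bar>b\<bar>" "\<bar>b\<bar> \<le> of_nat m * \<bar>a\<bar>"
    using assms(1) unfolding arch_equiv_def by blast
  obtain k where k: "\<bar>c\<bar> \<le> of_nat k * \<bar>d\<bar>" "\<bar>d\<bar> \<le> of_nat k * \<bar>c\<bar>"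
    using assms(2) unfolding arch_equiv_def by blast
  have "\<bar>a * c\<bar> \<le> of_nat (m * k) * \<bar>b * d\<bar>" "\<bar>b * d\<bar> \<le> of_nat (m * k) * \<bar>a * c\<bar>"
    using mult_mono[OF m(1) k(1)] mult_mono[OF m(2) k(2)]
    by (simp_all add: abs_mult mult_ac)
  thus ?thesis unfolding arch_equiv_def by blast
qed

lemma arch_equiv_inverse:
  assumes "arch_equiv a b"
  shows "arch_equiv (inverse a) (inverse b)"
proof (cases "a = 0")
  case True
  thus ?thesis using assms arch_equiv_zero_iff arch_equiv_refl by fastforce
next
  case False
  hence "b \<noteq> 0" using assms arch_equiv_zero_iff by blast
  obtain m where m: "\<bar>a\<bar> \<le> of_nat m * \<bar>b\<bar>" "\<bar>b\<bar> \<le> of_nat m * \<bar>a\<bar>"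
    using assms unfolding arch_equiv_def by blast
  have "\<bar>inverse a\<bar> \<le> of_nat m * \<bar>inverse b\<bar>" "\<bar>inverse b\<bar> \<le> of_nat m * \<bar>inverse a\<bar>"
    using m False \<open>b \<noteq> 0\<close> by (simp_all add: field_simps)
  thus ?thesis unfolding arch_equiv_def by blast
qed

lemma arch_equiv_divide:
  "arch_equiv a b \<Longrightarrow> arch_equiv c d \<Longrightarrow> arch_equiv (a / c) (b / d)"
  by (simp add: divide_inverse arch_equiv_mult arch_equiv_inverse)

lemma infinitely_large_abs_arch_equiv:
  assumes "arch_equiv a b" "infinitely_large \<bar>a\<bar>"
  shows "infinitely_large \<bar>b\<bar>"
  unfolding infinitely_large_def
proof
  fix n :: nat
  obtain m where m: "\<bar>a\<bar> \<le> of_nat m * \<bar>b\<bar>"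
    using assms(1) unfolding arch_equiv_def by blast
  have "of_nat (m * n) < \<bar>a\<bar>" using assms(2) unfolding infinitely_large_def by blast
  hence "of_nat m * of_nat n < of_nat m * \<bar>b\<bar>" using m by simp
  thus "of_nat n < \<bar>b\<bar>" by (simp add: mult_less_cancel_left)
qed

lemma infinite_or_infinitesimal_arch_equiv:
  "arch_equiv a b \<Longrightarrow> infinite_or_infinitesimal a \<Longrightarrow> infinite_or_infinitesimal b"
  unfolding infinite_or_infinitesimal_def
  using infinitely_large_abs_arch_equiv arch_equiv_inverse by blast

lemma sum_arch_equiv_dominant_term:
  fixes t :: "'b \<Rightarrow> 'a::linordered_field"
  assumes fin: "finite I" and ne: "I \<noteq> {}" and nz: "\<And>i. i \<in> I \<Longrightarrow> t i \<noteq> 0"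
    and apart: "\<And>i j. i \<in> I \<Longrightarrow> j \<in> I \<Longrightarrow> i \<noteq> j \<Longrightarrow> infinite_or_infinitesimal (t i / t j)"
  shows "\<exists>i\<in>I. arch_equiv (sum t I) (t i)"
proof -
  have "Max ((\<lambda>i. \<bar>t i\<bar>) ` I) \<in> (\<lambda>i. \<bar>t i\<bar>) ` I" using fin ne by simp
  then obtain i0 where i0: "i0 \<in> I" "\<bar>t i0\<bar> = Max ((\<lambda>i. \<bar>t i\<bar>) ` I)" by auto
  hence i0_max: "\<bar>t j\<bar> \<le> \<bar>t i0\<bar>" if "j \<in> I" for j using fin that by simp
  define N where "N = card I"
  have "0 < N" unfolding N_def using fin ne by (simp add: card_gt_0_iff)
  have small: "of_nat (2 * N) * \<bar>t j\<bar> \<le> \<bar>t i0\<bar>" if j: "j \<in> I - {i0}" for j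
  proof -
    have "\<not> infinitely_large \<bar>inverse (t i0 / t j)\<bar>"
    proof
      assume "infinitely_large \<bar>inverse (t i0 / t j)\<bar>"
      hence "\<bar>t i0\<bar> < \<bar>t j\<bar>"
        using infinitely_large_gt_one nz i0(1) by (fastforce simp: field_simps)
      thus False using i0_max j by force
    qed
    hence "infinitely_large \<bar>t i0 / t j\<bar>"
      using apart[of i0 j] i0(1) j unfolding infinite_or_infinitesimal_def by blast
    hence "of_nat (2 * N) < \<bar>t i0\<bar> / \<bar>t j\<bar>"
      unfolding infinitely_large_def abs_divide by blast
    thus ?thesis using nz j by (simp add: field_simps)
  qed
  have "\<bar>sum t I - t i0\<bar> = \<bar>sum t (I - {i0})\<bar>"
    using fin i0(1) by (simp add: sum.remove)
  also have "\<dots> \<le> (\<Sum>j\<in>I - {i0}. \<bar>t j\<bar>)" by (rule sum_abs)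
  also have "\<dots> \<le> (\<Sum>j\<in>I - {i0}. \<bar>t i0\<bar> / of_nat (2 * N))"
    using small \<open>0 < N\<close> by (intro sum_mono) (simp add: field_simps)
  also have "\<dots> = of_nat (card (I - {i0})) * \<bar>t i0\<bar> / of_nat (2 * N)" by simp
  also have "\<dots> \<le> of_nat N * \<bar>t i0\<bar> / of_nat (2 * N)"
    unfolding N_def using fin by (intro divide_right_mono mult_right_mono) (auto intro: card_mono)
  also have "\<dots> = \<bar>t i0\<bar> / 2" using \<open>0 < N\<close> by simp
  finally have "\<bar>sum t I - t i0\<bar> \<le> \<bar>t i0\<bar> / 2" .
  hence "\<bar>sum t I\<bar> \<le> 2 * \<bar>t i0\<bar>" "\<bar>t i0\<bar> \<le> 2 * \<bar>sum t I\<bar>"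
    using abs_triangle_ineq2[of "sum t I" "t i0"] abs_triangle_ineq2[of "t i0" "sum t I"]
      abs_minus_commute[of "t i0" "sum t I"] by linarith+
  hence "\<bar>sum t I\<bar> \<le> of_nat 2 * \<bar>t i0\<bar> \<and> \<bar>t i0\<bar> \<le> of_nat 2 * \<bar>sum t I\<bar>" by simp
  thus ?thesis unfolding arch_equiv_def using i0(1) by blast
qed

lemma poly_arch_equiv_dominant_term:
  fixes p :: "'a::linordered_field poly"
  assumes "p \<noteq> 0" "z \<noteq> 0"
    and apart: "\<And>i j. coeff p i \<noteq> 0 \<Longrightarrow> coeff p j \<noteq> 0 \<Longrightarrow> i \<noteq> j \<Longrightarrow>
      infinite_or_infinitesimal ((coeff p i * z ^ i) / (coeff p j * z ^ j))"
  shows "\<exists>i. coeff p i \<noteq> 0 \<and> arch_equiv (poly p z) (coeff p i * z ^ i)"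
proof -
  define I where "I = {i. coeff p i \<noteq> 0}"
  have "I \<subseteq> {..degree p}" unfolding I_def using le_degree by auto
  hence "poly p z = (\<Sum>i\<in>I. coeff p i * z ^ i)"
    unfolding poly_altdef by (intro sum.mono_neutral_right) (auto simp: I_def)
  moreover have "finite I" using \<open>I \<subseteq> {..degree p}\<close> finite_subset by blast
  moreover have "I \<noteq> {}" unfolding I_def using assms(1) leading_coeff_0_iff by blast
  ultimately show ?thesis
    using sum_arch_equiv_dominant_term[of I "\<lambda>i. coeff p i * z ^ i"] assms(2) apart
    unfolding I_def by auto
qed

text \<open>In valuation terms: v(w) is infinitesimal compared with v(z).\<close>

definition negligible :: "'a::linordered_field \<Rightarrow> 'a \<Rightarrow> bool" where
  "negligible z w \<longleftrightarrow> 0 < w \<and> (\<forall>m. w ^ m \<le> z \<and> inverse w ^ m \<le> z)"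

lemma negligible_one: "1 \<le> z \<Longrightarrow> negligible z 1"
  unfolding negligible_def by simp

lemma negligible_inverse: "negligible z w \<Longrightarrow> negligible z (inverse w)"
  unfolding negligible_def by simp

lemma negligible_mult:
  assumes "negligible z v" "negligible z w"
  shows "negligible z (v * w)"
proof -
  have "0 \<le> z" using assms(1) unfolding negligible_def by (metis order.trans power_0 zero_le_one)
  have bound: "(a * b) ^ m \<le> z" if "0 < a" "0 < b" "\<forall>m. a ^ m \<le> z" "\<forall>m. b ^ m \<le> z" for a b :: 'a and m
  proof (rule power2_le_imp_le)
    have "((a * b) ^ m)\<^sup>2 = a ^ (2 * m) * b ^ (2 * m)"
      by (simp add: power_mult_distrib power_mult[symmetric] mult.commute)
    also have "\<dots> \<le> z * z"
      using that \<open>0 \<le> z\<close> by (intro mult_mono) auto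
    also have "\<dots> = z\<^sup>2" by (simp add: power2_eq_square)
    finally show "((a * b) ^ m)\<^sup>2 \<le> z\<^sup>2" .
  qed (fact \<open>0 \<le> z\<close>)
  show ?thesis
    using assms bound[of v w] bound[of "inverse v" "inverse w"]
    unfolding negligible_def by (simp add: mult.commute)
qed

lemma negligible_power_int:
  assumes "1 \<le> x" "\<And>n. x ^ n \<le> z"
  shows "negligible z (x powi k)"
proof -
  have bound: "(x powi l) ^ m \<le> z" for l m
  proof -
    have "(x powi l) ^ m = x powi (l * int m)" by (simp add: power_int_power')
    also have "\<dots> \<le> x powi \<bar>l * int m\<bar>" using assms(1) by (intro power_int_increasing) auto
    also have "\<dots> = x ^ nat \<bar>l * int m\<bar>" by (simp add: power_int_nonneg_exp)
    also have "\<dots> \<le> z" by (rule assms(2))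
    finally show ?thesis .
  qed
  show ?thesis
    unfolding negligible_def
    using assms(1) bound[of k] bound[of "- k"] by (simp add: power_int_minus)
qed

lemma infinitely_large_power_mult_negligible:
  assumes z: "infinitely_large z" and w: "negligible z w" and "0 < n"
  shows "infinitely_large (z ^ n * w)"
proof -
  have "1 < z" using z by (rule infinitely_large_gt_one)
  have "0 < w" "inverse w ^ 2 \<le> z" using w unfolding negligible_def by blast+
  hence "1 \<le> z * w ^ 2" by (simp add: field_simps)
  hence "z \<le> (z * w) ^ 2" using \<open>1 < z\<close> by (simp add: power2_eq_square mult_ac)
  hence "infinitely_large (z * w)"
    using \<open>0 < w\<close> \<open>1 < z\<close> by (intro infinitely_large_root[OF z]) simp_all
  moreover have "z \<le> z ^ n" using power_increasing[of 1 n z] \<open>1 < z\<close> \<open>0 < n\<close> by simp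
  hence "z * w \<le> z ^ n * w" using \<open>0 < w\<close> by simp
  ultimately show ?thesis by (rule infinitely_large_mono)
qed

section \<open>Realizations of a multiplicative cut\<close>

locale real_closed_mult_cut =
  fixes K Cm Cp :: "'a::linordered_field set"
  assumes real_closed: "real_closed_subfield K" and mult_cut: "multiplicative_cut K Cm Cp"
begin

lemma subfield_K: "subfield K"
  using real_closed by (rule real_closed_subfield_imp_subfield)

lemma K_eq_Cm_Un_Cp: "K = Cm \<union> Cp" and Cm_Int_Cp: "Cm \<inter> Cp = {}" and two_in_Cm: "2 \<in> Cm"
  using mult_cut unfolding multiplicative_cut_def is_cut_def by auto

lemma Cm_power: "c \<in> Cm \<Longrightarrow> 0 < c \<Longrightarrow> 0 < m \<Longrightarrow> c ^ m \<in> Cm"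
proof (induction m)
  case (Suc m)
  thus ?case
    using mult_cut unfolding multiplicative_cut_def by (cases "m = 0") auto
qed simp

lemma realizer_gt_two: "realizes_cut K Cm Cp z \<Longrightarrow> 2 < z"
  using two_in_Cm unfolding realizes_cut_def by blast

lemma realizer_infinitely_large:
  assumes z: "realizes_cut K Cm Cp z"
  shows "infinitely_large z"
  unfolding infinitely_large_def
proof
  fix n :: nat
  have "(of_nat n :: 'a) < 2 ^ Suc n" using of_nat_less_two_power[of "Suc n", where 'a='a] by simp
  also have "\<dots> < z" using Cm_power[OF two_in_Cm, of "Suc n"] z unfolding realizes_cut_def by simp
  finally show "of_nat n < z" .
qed

lemma Cp_gt_realizer_powers:
  assumes z: "realizes_cut K Cm Cp z" and c: "c \<in> Cp"
  shows "z ^ m < c"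
proof -
  have "z < c" using z c unfolding realizes_cut_def by blast
  show ?thesis
  proof (cases "m = 0")
    case True
    thus ?thesis using realizer_gt_two[OF z] \<open>z < c\<close> by simp
  next
    case False
    have "c \<in> K" using c K_eq_Cm_Un_Cp by blast
    moreover have "0 < c" using realizer_gt_two[OF z] \<open>z < c\<close> by simp
    ultimately obtain r where r: "r \<in> K" "0 < r" "r ^ m = c"
      using real_closed_subfield_nth_root[OF real_closed] False by blast
    have "r \<notin> Cm"
    proof
      assume "r \<in> Cm"
      hence "c \<in> Cm" using Cm_power[of r m] r False by simp
      thus False using c Cm_Int_Cp by blast
    qed
    hence "r \<in> Cp" using r(1) K_eq_Cm_Un_Cp by blast
    hence "z < r" using z unfolding realizes_cut_def by blast
    hence "z ^ m < r ^ m" using realizer_gt_two[OF z] by (intro power_strict_mono) (use False in auto)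
    thus ?thesis using r by simp
  qed
qed

lemma cut_element_trichotomy:
  assumes z: "realizes_cut K Cm Cp z" and c: "c \<in> K" "c \<noteq> 0"
  shows "(\<forall>m. z ^ m < \<bar>c\<bar>) \<or> (\<forall>m. z ^ m < inverse \<bar>c\<bar>) \<or> negligible z \<bar>c\<bar>"
proof -
  have "\<bar>c\<bar> \<in> K" "inverse \<bar>c\<bar> \<in> K"
    using c subfield_K by (auto simp: subfield_abs subfield_inverse)
  hence "\<bar>c\<bar> \<in> Cp \<or> inverse \<bar>c\<bar> \<in> Cp \<or> (\<bar>c\<bar> \<in> Cm \<and> inverse \<bar>c\<bar> \<in> Cm)"
    using K_eq_Cm_Un_Cp by blast
  moreover have "a ^ m \<le> z" if "a \<in> Cm" "0 < a" for a m
  proof (cases "m = 0")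
    case True
    thus ?thesis using realizer_gt_two[OF z] by simp
  next
    case False
    hence "a ^ m \<in> Cm" using Cm_power that by blast
    thus ?thesis using z unfolding realizes_cut_def by simp
  qed
  ultimately show ?thesis
    using Cp_gt_realizer_powers[OF z] c(2) unfolding negligible_def by auto
qed

lemma cut_term_infinite_or_infinitesimal_nat:
  assumes z: "realizes_cut K Cm Cp z" and c: "c \<in> K" "c \<noteq> 0"
    and w: "negligible z w" and "0 < n"
  shows "infinite_or_infinitesimal (c * z ^ n * w)"
proof -
  define v where "v = \<bar>c\<bar> * z ^ n * w"
  have "1 < z" using realizer_gt_two[OF z] by simp
  have "0 < w" "w ^ 1 \<le> z" "inverse w ^ 1 \<le> z" using w unfolding negligible_def by blast+
  hence "0 < w" "w \<le> z" "inverse w \<le> z" by simp_all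
  hence "0 < v" unfolding v_def using c \<open>1 < z\<close> by simp
  have "1 \<le> z ^ n" using \<open>1 < z\<close> by simp
  consider "\<forall>m. z ^ m < \<bar>c\<bar>" | "\<forall>m. z ^ m < inverse \<bar>c\<bar>" | "negligible z \<bar>c\<bar>"
    using cut_element_trichotomy[OF z c] by blast
  hence "infinitely_large v \<or> infinitely_large (inverse v)"
  proof cases
    case 1
    have "1 \<le> z * w" using \<open>inverse w \<le> z\<close> \<open>0 < w\<close> by (simp add: field_simps)
    have "z * z < \<bar>c\<bar>" using 1 by (metis power2_eq_square)
    also have "\<dots> \<le> \<bar>c\<bar> * (z ^ n * (z * w))"
      using mult_mono[OF \<open>1 \<le> z ^ n\<close> \<open>1 \<le> z * w\<close>] \<open>1 \<le> z ^ n\<close>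
      by (simp add: mult_le_cancel_left1)
    also have "\<dots> = v * z" unfolding v_def by (simp add: mult_ac)
    finally have "z < v" using \<open>1 < z\<close> by simp
    thus ?thesis using infinitely_large_mono[OF realizer_infinitely_large[OF z]] by simp
  next
    case 2
    have "z * z ^ Suc n < inverse \<bar>c\<bar>" using 2 by (metis power_Suc)
    also have "\<dots> = inverse v * (z ^ n * w)"
      unfolding v_def using c \<open>0 < w\<close> \<open>1 < z\<close> by (simp add: field_simps)
    also have "\<dots> \<le> inverse v * z ^ Suc n"
      using \<open>w \<le> z\<close> \<open>0 < v\<close> \<open>1 < z\<close> by (simp add: mult_left_mono)
    finally have "z < inverse v" using \<open>1 < z\<close> by simp
    thus ?thesis using infinitely_large_mono[OF realizer_infinitely_large[OF z]] by simp
  next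
    case 3
    have "v = z ^ n * (\<bar>c\<bar> * w)" unfolding v_def by (simp add: mult_ac)
    thus ?thesis using infinitely_large_power_mult_negligible[OF realizer_infinitely_large[OF z]
        negligible_mult[OF 3 w] \<open>0 < n\<close>] by simp
  qed
  moreover have "\<bar>c * z ^ n * w\<bar> = v" unfolding v_def using \<open>0 < w\<close> \<open>1 < z\<close> by (simp add: abs_mult)
  ultimately show ?thesis unfolding infinite_or_infinitesimal_def abs_inverse by simp_all
qed

lemma cut_term_infinite_or_infinitesimal:
  assumes z: "realizes_cut K Cm Cp z" and c: "c \<in> K" "c \<noteq> 0"
    and w: "negligible z w" and "d \<noteq> 0"
  shows "infinite_or_infinitesimal (c * z powi d * w)"
proof (cases "0 < d")
  case True
  then obtain n where "d = int n" "0 < n" by (metis pos_int_cases)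
  thus ?thesis using cut_term_infinite_or_infinitesimal_nat[OF z c w] by simp
next
  case False
  then obtain n where n: "d = - int n" "0 < n"
    using \<open>d \<noteq> 0\<close> by (metis neg_int_cases not_less_iff_gr_or_eq)
  have "inverse c \<in> K" "inverse c \<noteq> 0" using c subfield_K by (auto simp: subfield_inverse)
  hence "infinite_or_infinitesimal (inverse c * z ^ n * inverse w)"
    using cut_term_infinite_or_infinitesimal_nat[OF z _ _ negligible_inverse[OF w] \<open>0 < n\<close>] by blast
  moreover have "inverse (c * z powi d * w) = inverse c * z ^ n * inverse w"
    unfolding n(1) by (simp add: power_int_minus)
  ultimately show ?thesis by (metis infinite_or_infinitesimal_inverse_iff)
qed

lemma poly_over_arch_equiv_monomial:
  assumes x: "realizes_cut K Cm Cp x" and f: "poly_over K f"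
  shows "\<exists>a\<in>K. \<exists>i. arch_equiv (poly f x) (a * x ^ i)"
proof (cases "f = 0")
  case True
  hence "arch_equiv (poly f x) (0 * x ^ 0)" using arch_equiv_refl[of 0] by simp
  thus ?thesis using subfield_0[OF subfield_K] by blast
next
  case False
  have "1 < x" using realizer_gt_two[OF x] by simp
  hence "x \<noteq> 0" "negligible x 1" by (simp_all add: negligible_one)
  have apart: "infinite_or_infinitesimal ((coeff f i * x ^ i) / (coeff f j * x ^ j))"
    if "coeff f i \<noteq> 0" "coeff f j \<noteq> 0" "i \<noteq> j" for i j
  proof -
    have c: "coeff f i / coeff f j \<in> K" "coeff f i / coeff f j \<noteq> 0"
      using f subfield_K that unfolding poly_over_def by (simp_all add: subfield_divide)
    have "int i - int j \<noteq> 0" using that by simp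
    have "(coeff f i * x ^ i) / (coeff f j * x ^ j)
        = coeff f i / coeff f j * x powi (int i - int j) * 1"
      using \<open>1 < x\<close> by (simp add: power_int_diff)
    also have "infinite_or_infinitesimal \<dots>"
      using cut_term_infinite_or_infinitesimal[OF x c \<open>negligible x 1\<close> \<open>int i - int j \<noteq> 0\<close>] .
    finally show ?thesis .
  qed
  obtain i where "coeff f i \<noteq> 0" "arch_equiv (poly f x) (coeff f i * x ^ i)"
    using poly_arch_equiv_dominant_term[OF False \<open>x \<noteq> 0\<close> apart] by blast
  thus ?thesis using f unfolding poly_over_def by blast
qed

lemma adjoin_arch_equiv_monomial:
  assumes x: "realizes_cut K Cm Cp x" and w: "w \<in> adjoin K x"
  shows "\<exists>a\<in>K. \<exists>k. arch_equiv w (a * x powi k)"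
proof -
  obtain f g where fg: "poly_over K f" "poly_over K g" "w = poly f x / poly g x"
    using w adjoin_subset_poly_fractions[OF subfield_K] by (blast elim: poly_fractionsE)
  obtain a i where a: "a \<in> K" "arch_equiv (poly f x) (a * x ^ i)"
    using poly_over_arch_equiv_monomial[OF x fg(1)] by blast
  obtain b j where b: "b \<in> K" "arch_equiv (poly g x) (b * x ^ j)"
    using poly_over_arch_equiv_monomial[OF x fg(2)] by blast
  have "arch_equiv w ((a * x ^ i) / (b * x ^ j))"
    unfolding fg(3) using a(2) b(2) by (rule arch_equiv_divide)
  also have "(a * x ^ i) / (b * x ^ j) = a / b * x powi (int i - int j)"
    using realizer_gt_two[OF x] by (simp add: power_int_diff)
  finally show ?thesis
    using a(1) b(1) subfield_K by (intro bexI[of _ "a / b"]) (auto simp: subfield_divide)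
qed

lemma separated_monomial_infinite_or_infinitesimal:
  assumes x: "realizes_cut K Cm Cp x" and y: "realizes_cut K Cm Cp y"
    and sep: "(\<forall>n. x ^ n \<le> y) \<or> (\<forall>n. y ^ n \<le> x)"
    and c: "c \<in> K" "c \<noteq> 0" and "d \<noteq> 0"
  shows "infinite_or_infinitesimal (c * x powi e * y powi d)"
  using sep
proof
  assume "\<forall>n. x ^ n \<le> y"
  hence "negligible y (x powi e)"
    using realizer_gt_two[OF x] by (intro negligible_power_int) auto
  hence "infinite_or_infinitesimal (c * y powi d * x powi e)"
    using cut_term_infinite_or_infinitesimal[OF y c _ \<open>d \<noteq> 0\<close>] by blast
  thus ?thesis by (simp only: mult.assoc mult.commute[of "x powi e"])
next
  assume y_below: "\<forall>n. y ^ n \<le> x"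
  show ?thesis
  proof (cases "e = 0")
    case True
    have "negligible y 1" using realizer_gt_two[OF y] by (intro negligible_one) simp
    from cut_term_infinite_or_infinitesimal[OF y c this \<open>d \<noteq> 0\<close>]
    show ?thesis using True by simp
  next
    case False
    have "negligible x (y powi d)"
      using realizer_gt_two[OF y] y_below by (intro negligible_power_int) auto
    thus ?thesis using cut_term_infinite_or_infinitesimal[OF x c _ False] by simp
  qed
qed

lemma not_algebraic_over_adjoin:
  assumes x: "realizes_cut K Cm Cp x" and y: "realizes_cut K Cm Cp y"
    and sep: "(\<forall>n. x ^ n \<le> y) \<or> (\<forall>n. y ^ n \<le> x)"
  shows "\<not> algebraic_over (adjoin K x) y"
proof
  assume "algebraic_over (adjoin K x) y"
  then obtain p where p: "p \<noteq> 0" "\<And>i. coeff p i \<in> adjoin K x" "poly p y = 0"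
    unfolding algebraic_over_def by blast
  obtain a k where ak: "\<And>i. a i \<in> K" "\<And>i. arch_equiv (coeff p i) (a i * x powi k i)"
    using adjoin_arch_equiv_monomial[OF x p(2)] by metis
  have "0 < x" "0 < y" using realizer_gt_two[OF x] realizer_gt_two[OF y] by simp_all
  have apart: "infinite_or_infinitesimal ((coeff p i * y ^ i) / (coeff p j * y ^ j))"
    if "coeff p i \<noteq> 0" "coeff p j \<noteq> 0" "i \<noteq> j" for i j
  proof -
    have equiv: "arch_equiv ((coeff p i * y ^ i) / (coeff p j * y ^ j))
        ((a i * x powi k i * y ^ i) / (a j * x powi k j * y ^ j))"
      by (intro arch_equiv_divide arch_equiv_mult ak(2) arch_equiv_refl)
    have "a i \<noteq> 0" "a j \<noteq> 0"
      using that arch_equiv_zero_iff[OF ak(2)[of i]] arch_equiv_zero_iff[OF ak(2)[of j]] by auto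
    hence c: "a i / a j \<in> K" "a i / a j \<noteq> 0"
      using ak(1) subfield_K by (simp_all add: subfield_divide)
    have "(a i * x powi k i * y ^ i) / (a j * x powi k j * y ^ j)
        = a i / a j * x powi (k i - k j) * y powi (int i - int j)"
      using \<open>a i \<noteq> 0\<close> \<open>a j \<noteq> 0\<close> \<open>0 < x\<close> \<open>0 < y\<close> by (simp add: power_int_diff)
    also have "infinite_or_infinitesimal \<dots>"
      using that by (intro separated_monomial_infinite_or_infinitesimal[OF x y sep c]) simp
    finally show ?thesis by (rule infinite_or_infinitesimal_arch_equiv[OF arch_equiv_sym[OF equiv]])
  qed
  then obtain i where "coeff p i \<noteq> 0" "arch_equiv (poly p y) (coeff p i * y ^ i)"
    using poly_arch_equiv_dominant_term[OF p(1) _ apart] \<open>0 < y\<close> by auto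
  thus False using p(3) arch_equiv_zero_iff[of 0 "coeff p i * y ^ i"] \<open>0 < y\<close> by simp
qed

end

lemma real_closed_root_between:
  fixes x y :: "'a::linordered_field"
  assumes L: "real_closed_subfield L" "x \<in> L" and "1 \<le> x" "1 \<le> y"
    and "y < x ^ k" "x < y ^ l"
  shows "\<exists>n::nat. n > 0 \<and> (\<exists>r. 0 < r \<and> r ^ n = x \<and> r < y) \<and> y < x ^ n"
proof -
  define n where "n = Suc (max k l)"
  have "0 < n" "k \<le> n" "l \<le> n" unfolding n_def by simp_all
  have "y < x ^ n" using assms(5) power_increasing[OF \<open>k \<le> n\<close> assms(3)] by (rule less_le_trans)
  moreover have "0 < x" using assms(3) by simp
  then obtain r where r: "0 < r" "r ^ n = x"
    using real_closed_subfield_nth_root[OF L \<open>0 < x\<close> \<open>0 < n\<close>] by blast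
  moreover have "r ^ n < y ^ n"
    using r(2) assms(6) power_increasing[OF \<open>l \<le> n\<close> assms(4)] by simp
  hence "r < y" using assms(4) by (simp add: power_less_imp_less_base)
  ultimately show ?thesis using \<open>0 < n\<close> by blast
qed

theorem lemma2p9:
  fixes K L Cm Cp :: "'a::linordered_field set" and x y :: 'a
  assumes "real_closed_subfield K"
    and "multiplicative_cut K Cm Cp"
    and "realizes_cut K Cm Cp x"
    and "real_closure_of L (adjoin K x)"
    and "y \<in> L"
    and "realizes_cut K Cm Cp y"
  shows "\<exists>n::nat. n > 0 \<and> (\<exists>r. 0 < r \<and> r ^ n = x \<and> r < y) \<and> y < x ^ n"
proof -
  interpret real_closed_mult_cut K Cm Cp using assms(1,2) by unfold_locales
  have L: "real_closed_subfield L" "x \<in> L" and "algebraic_over (adjoin K x) y"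
    using assms(4,5) mem_adjoin_self unfolding real_closure_of_def by blast+
  hence "\<not> ((\<forall>n. x ^ n \<le> y) \<or> (\<forall>n. y ^ n \<le> x))"
    using not_algebraic_over_adjoin[OF assms(3,6)] by blast
  then obtain k l where "y < x ^ k" "x < y ^ l" by (auto simp: not_le)
  moreover have "1 \<le> x" "1 \<le> y"
    using realizer_gt_two[OF assms(3)] realizer_gt_two[OF assms(6)] by simp_all
  ultimately show ?thesis using real_closed_root_between[OF L] by blast
qed

end
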